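(* Let $G$ be a bounded metric operator in $\mathcal H$ and $A$ a closed densely defined operator in $\mathcal H$. If $A$ is self-adjoint in $\mathcal H(G)$, then $GA$ is symmetric in $\mathcal H$ and $A$ is quasi-Hermitian with respect to $G$. If moreover $G^{-1}$ is bounded, then $A$ is self-adjoint in $\mathcal H(G)$ if and only if $GA$ is self-adjoint in $\mathcal H$.
   Context: A metric operator in $\mathcal H$ is a self-adjoint operator $G$ with $\langle G\xi,\xi\rangle>0$ for all nonzero $\xi\in D(G)$. For bounded metric $G$, $\mathcal H(G)$ is the completion of $\mathcal H$ under $\|\xi\|_G=\|G^{1/2}\xi\|$ with inner product $\langle\xi,\eta\rangle_G=\langle G^{1/2}\xi,G^{1/2}\eta\rangle$; $D(A)$ is dense in $\mathcal H(G)$, and "$A$ is self-adjoint in $\mathcal H(G)$" means $A=A^\#$, where $A^\#$ is the adjoint in $\mathcal H(G)$ of $A$ viewed as an operator in $\mathcal H(G)$ with domain $D(A)$. $A$ is quasi-Hermitian with respect to $G$ if $D(A)\subseteq D(G)$ and $\langle A\xi,G\eta\rangle=\langle G\xi,A\eta\rangle$ for all $\xi,\eta\in D(A)$. *)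

theory Defs
  imports "HOL-Analysis.Analysis"
begin

class complex_vector = real_vector +
  fixes scaleC :: "complex \<Rightarrow> 'a \<Rightarrow> 'a" (infixr "*\<^sub>C" 75)
  assumes scaleC_add_right: "a *\<^sub>C (x + y) = a *\<^sub>C x + a *\<^sub>C y"
    and scaleC_add_left: "(a + b) *\<^sub>C x = a *\<^sub>C x + b *\<^sub>C x"
    and scaleC_scaleC: "a *\<^sub>C (b *\<^sub>C x) = (a * b) *\<^sub>C x"
    and scaleC_one: "1 *\<^sub>C x = x"
    and scaleR_scaleC: "scaleR r x = complex_of_real r *\<^sub>C x"

class complex_inner = complex_vector + real_normed_vector +
  fixes cinner :: "'a \<Rightarrow> 'a \<Rightarrow> complex"
  assumes cinner_commute: "cinner x y = cnj (cinner y x)"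
    and cinner_add_left: "cinner (x + y) z = cinner x z + cinner y z"
    and cinner_scaleC_left: "cinner (a *\<^sub>C x) y = a * cinner x y"
    and cinner_Re_nonneg: "0 \<le> Re (cinner x x)"
    and cinner_eq_zero_iff: "cinner x x = 0 \<longleftrightarrow> x = 0"
    and norm_eq_sqrt_cinner: "norm x = sqrt (Re (cinner x x))"

class chilbert_space = complex_inner + complete_space

definition clinear :: "('a::complex_vector \<Rightarrow> 'b::complex_vector) \<Rightarrow> bool" where
  "clinear f \<longleftrightarrow> (\<forall>x y. f (x + y) = f x + f y) \<and> (\<forall>a x. f (a *\<^sub>C x) = a *\<^sub>C f x)"

definition csubspace :: "'a::complex_vector set \<Rightarrow> bool" where
  "csubspace D \<longleftrightarrow> 0 \<in> D \<and> (\<forall>x\<in>D. \<forall>y\<in>D. x + y \<in> D) \<and> (\<forall>a. \<forall>x\<in>D. a *\<^sub>C x \<in> D)"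

definition is_operator :: "'a::complex_vector set \<Rightarrow> ('a \<Rightarrow> 'a) \<Rightarrow> bool" where
  "is_operator D A \<longleftrightarrow> csubspace D \<and> (\<forall>x\<in>D. \<forall>y\<in>D. A (x + y) = A x + A y)
     \<and> (\<forall>a. \<forall>x\<in>D. A (a *\<^sub>C x) = a *\<^sub>C A x)"

definition graph :: "'a set \<Rightarrow> ('a \<Rightarrow> 'b) \<Rightarrow> ('a \<times> 'b) set" where
  "graph D A = {(x, A x) | x. x \<in> D}"

definition densely_defined :: "'a::topological_space set \<Rightarrow> bool" where
  "densely_defined D \<longleftrightarrow> closure D = UNIV"

definition closed_operator :: "'a::complex_inner set \<Rightarrow> ('a \<Rightarrow> 'a) \<Rightarrow> bool" where
  "closed_operator D A \<longleftrightarrow> is_operator D A \<and> closed (graph D A)"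

definition adjoint_graph :: "'a::complex_inner set \<Rightarrow> ('a \<Rightarrow> 'a) \<Rightarrow> ('a \<times> 'a) set" where
  "adjoint_graph D A = {(y, z). \<forall>x\<in>D. cinner (A x) y = cinner x z}"

definition symmetric_op :: "'a::complex_inner set \<Rightarrow> ('a \<Rightarrow> 'a) \<Rightarrow> bool" where
  "symmetric_op D A \<longleftrightarrow> densely_defined D \<and> graph D A \<subseteq> adjoint_graph D A"

definition self_adjoint_op :: "'a::complex_inner set \<Rightarrow> ('a \<Rightarrow> 'a) \<Rightarrow> bool" where
  "self_adjoint_op D A \<longleftrightarrow> densely_defined D \<and> adjoint_graph D A = graph D A"

definition bounded_metric_operator :: "('a::complex_inner \<Rightarrow> 'a) \<Rightarrow> bool" where
  "bounded_metric_operator G \<longleftrightarrow> clinear G \<and> (\<exists>C. \<forall>x. norm (G x) \<le> C * norm x)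
     \<and> (\<forall>x y. cinner (G x) y = cinner x (G y))
     \<and> (\<forall>x. x \<noteq> 0 \<longrightarrow> 0 < Re (cinner (G x) x))"

text \<open>J : H \<rightarrow> K realises K as (a model of) the completion H(G) of H under the inner product
  \<open>\<langle>x,y\<rangle>_G = \<langle>G^{1/2}x, G^{1/2}y\<rangle> = \<langle>Gx, y\<rangle>\<close>: J is linear, isometric for this
  inner product, and has dense range.\<close>
definition is_G_completion :: "('a::complex_inner \<Rightarrow> 'a) \<Rightarrow> ('a \<Rightarrow> 'b::chilbert_space) \<Rightarrow> bool" where
  "is_G_completion G J \<longleftrightarrow> clinear J \<and> (\<forall>x y. cinner (J x) (J y) = cinner (G x) y)
     \<and> closure (range J) = UNIV"

text \<open>A is self-adjoint in H(G): A = A^#, where A^# is the adjoint in H(G) of A viewed as an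
  operator in H(G) with domain D(A) (identified with J ` D).\<close>
definition self_adjoint_in_completion ::
  "('a::complex_inner \<Rightarrow> 'b::chilbert_space) \<Rightarrow> 'a set \<Rightarrow> ('a \<Rightarrow> 'a) \<Rightarrow> bool" where
  "self_adjoint_in_completion J D A \<longleftrightarrow>
     {(u, v). \<forall>x\<in>D. cinner (J (A x)) u = cinner (J x) v} = {(J x, J (A x)) | x. x \<in> D}"

text \<open>Quasi-Hermiticity w.r.t. a bounded G (the condition D(A) \<subseteq> D(G) = H is automatic).\<close>
definition quasi_hermitian :: "('a::complex_inner \<Rightarrow> 'a) \<Rightarrow> 'a set \<Rightarrow> ('a \<Rightarrow> 'a) \<Rightarrow> bool" where
  "quasi_hermitian G D A \<longleftrightarrow> (\<forall>x\<in>D. \<forall>y\<in>D. cinner (A x) (G y) = cinner (G x) (A y))"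

end

theory Submission
  imports Defs
begin

(* Proof of Proposition 5.11.  Write q(x) = Re <Gx,x> = |Jx|^2 for the G-form, realised
   isometrically by the completion map J : H -> H(G).  The whole argument transports adjoints
   along J and G.  Define the "metric adjoint" of A in H as
       A^# = {(y,w). (y, Gw) is in the graph of (GA)^*}.
   (1) A pair (Jy, Jw) lies in the graph of the H(G)-adjoint of A iff (y,w) lies in A^#.
       Hence A self-adjoint in H(G) gives graph A <= A^#, which is exactly symmetry of GA and
       quasi-Hermiticity of A.
   (2) If G^{-1} is bounded, then G is bounded below and coercive (|x|^2 <= c q(x)); a
       Banach fixed point argument for x - G x / M shows that G is onto, and J, being bounded
       below with dense range on a complete space, is onto as well.  With J and G bijective,
       both "A self-adjoint in H(G)" and "GA self-adjoint in H" become A^# = graph A. *)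

lemma cinner_scaleC_right: "cinner (x::'a::complex_inner) (a *\<^sub>C y) = cnj a * cinner x y"
  by (metis cinner_commute cinner_scaleC_left complex_cnj_mult)

lemma cinner_scaleR_left: "cinner (r *\<^sub>R (x::'a::complex_inner)) y = of_real r * cinner x y"
  by (simp add: scaleR_scaleC cinner_scaleC_left)

lemma cinner_scaleR_right: "cinner (x::'a::complex_inner) (r *\<^sub>R y) = of_real r * cinner x y"
  by (simp add: scaleR_scaleC cinner_scaleC_right)

lemma cinner_zero_left [simp]: "cinner 0 (y::'a::complex_inner) = 0"
  using cinner_add_left[of "0::'a" 0 y] by simp

lemma cinner_zero_right [simp]: "cinner (y::'a::complex_inner) 0 = 0"
  by (metis cinner_commute cinner_zero_left complex_cnj_zero)

lemma cinner_minus_left: "cinner (- x) (y::'a::complex_inner) = - cinner x y"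
  using cinner_add_left[of x "-x" y] by (simp add: minus_unique)

lemma cinner_diff_left: "cinner (x - z) (y::'a::complex_inner) = cinner x y - cinner z y"
  using cinner_add_left[of x "-z" y] by (simp add: cinner_minus_left)

lemma cinner_diff_right: "cinner (y::'a::complex_inner) (x - z) = cinner y x - cinner y z"
  by (metis cinner_commute cinner_diff_left complex_cnj_diff)

lemma cinner_self: "cinner (x::'a::complex_inner) x = of_real ((norm x)^2)"
proof -
  have "Im (cinner x x) = Im (cnj (cinner x x))"
    using cinner_commute[of x x] by (rule arg_cong)
  then have "Im (cinner x x) = 0" by simp
  moreover have "Re (cinner x x) = (norm x)^2"
    using cinner_Re_nonneg[of x] by (simp only: norm_eq_sqrt_cinner[of x] real_sqrt_pow2)
  ultimately show ?thesis by (simp add: complex_eq_iff)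
qed

lemma cinner_CS: "cmod (cinner (x::'a::complex_inner) y) \<le> norm x * norm y"
proof (cases "y = 0")
  case True then show ?thesis by simp
next
  case False
  define N where "N = (norm y)^2"
  have N: "N > 0" using False by (simp add: N_def)
  define c where "c = cinner x y"
  define a where "a = c / of_real N"
  have Nc: "(of_real N :: complex) \<noteq> 0" using N by simp
  have ca: "cnj a = cnj c / of_real N" by (simp add: a_def)
  have e1: "cinner y x = cnj c" by (simp add: c_def cinner_commute[of y x])
  have e2: "cinner y y = of_real N" by (simp add: N_def cinner_self)
  have e3: "c * cnj c = of_real ((cmod c)^2)" by (metis complex_norm_square)
  text \<open>Expand the squared norm of the component of x orthogonal to y.\<close>
  have "cinner (x - a *\<^sub>C y) (x - a *\<^sub>C y)
     = cinner x x - cnj a * cinner x y - a * cinner y x + a * cnj a * cinner y y"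
    by (simp add: cinner_diff_left cinner_diff_right cinner_scaleC_left cinner_scaleC_right
        algebra_simps)
  also have "\<dots> = cinner x x - (c * cnj c) / of_real N"
    unfolding e1 e2 ca c_def[symmetric] a_def using Nc by (simp add: field_simps)
  also have "\<dots> = of_real ((norm x)^2) - of_real ((cmod c)^2 / N)"
    by (simp add: e3 cinner_self)
  finally have "0 \<le> (norm x)^2 - (cmod c)^2 / N"
    using cinner_Re_nonneg[of "x - a *\<^sub>C y"] by simp
  then have "(cmod c)^2 \<le> (norm x * norm y)^2"
    using N unfolding N_def by (simp add: field_simps power_mult_distrib)
  then show ?thesis unfolding c_def by (rule power2_le_imp_le) simp
qed

lemma norm_diff_scaleR_sq:
  fixes u v :: "'a::complex_inner"
  shows "(norm (u - t *\<^sub>R v))^2 = (norm u)^2 - 2 * t * Re (cinner v u) + t^2 * (norm v)^2"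
proof -
  have "cinner (u - t *\<^sub>R v) (u - t *\<^sub>R v)
      = cinner u u - of_real t * (cinner v u + cinner u v) + of_real (t^2) * cinner v v"
    by (simp add: cinner_diff_left cinner_diff_right cinner_scaleR_left cinner_scaleR_right
        algebra_simps power2_eq_square)
  then have "Re (cinner (u - t *\<^sub>R v) (u - t *\<^sub>R v))
      = Re (cinner u u) - t * (Re (cinner v u) + Re (cinner u v)) + t^2 * Re (cinner v v)"
    by simp
  moreover have "Re (cinner u v) = Re (cinner v u)"
    using cinner_commute[of u v] by simp
  ultimately show ?thesis
    by (simp only: cinner_self Re_complex_of_real) simp
qed

lemma clinear_scaleR: "clinear f \<Longrightarrow> f (r *\<^sub>R x) = r *\<^sub>R f x"
  by (simp add: clinear_def scaleR_scaleC)

lemma clinear_diff: "clinear f \<Longrightarrow> f (x - y) = f x - f y"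
  unfolding clinear_def by (metis add_diff_cancel diff_add_cancel eq_diff_eq)

lemma clinear_imp_linear: "clinear f \<Longrightarrow> linear f"
  by (simp add: linear_iff clinear_scaleR) (simp add: clinear_def)

section \<open>Metric operators and the completion H(G)\<close>

text \<open>Positivity of the G-form makes both G and the completion map J injective.\<close>
lemma metric_operator_inj:
  assumes "bounded_metric_operator G"
  shows "inj G"
proof (rule injI, rule ccontr)
  fix x y assume "G x = G y" "x \<noteq> y"
  moreover have "clinear G" using assms by (simp add: bounded_metric_operator_def)
  ultimately have "G (x - y) = 0" by (simp add: clinear_diff)
  moreover have "0 < Re (cinner (G (x - y)) (x - y))"
    using assms \<open>x \<noteq> y\<close> unfolding bounded_metric_operator_def by (meson right_minus_eq)
  ultimately show False by simp
qed

lemma G_completion_norm_sq: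
  assumes "is_G_completion G J"
  shows "(norm (J x))^2 = Re (cinner (G x) x)"
  using assms cinner_self[of "J x"] by (simp add: is_G_completion_def)

lemma G_completion_inj:
  assumes "bounded_metric_operator G" and "is_G_completion G J"
  shows "inj J"
proof (rule injI, rule ccontr)
  fix x y assume "J x = J y" "x \<noteq> y"
  moreover have "clinear J" using assms(2) by (simp add: is_G_completion_def)
  ultimately have "J (x - y) = 0" by (simp add: clinear_diff)
  then have "Re (cinner (G (x - y)) (x - y)) = 0"
    using G_completion_norm_sq[OF assms(2)] by (metis norm_zero zero_power2)
  moreover have "0 < Re (cinner (G (x - y)) (x - y))"
    using assms(1) \<open>x \<noteq> y\<close> unfolding bounded_metric_operator_def by (meson right_minus_eq)
  ultimately show False by simp
qed

lemma G_completion_cauchy_schwarz: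
  assumes "is_G_completion G J"
  shows "cmod (cinner (G x) y) \<le> norm (J x) * norm (J y)"
  using assms cinner_CS[of "J x" "J y"] by (simp add: is_G_completion_def)

lemma metric_operator_bound:
  assumes "bounded_metric_operator G"
  obtains M where "M > 0" and "\<And>x. norm (G x) \<le> M * norm x"
proof -
  obtain M0 where "\<And>x. norm (G x) \<le> M0 * norm x"
    using assms by (auto simp: bounded_metric_operator_def)
  then have "norm (G x) \<le> max M0 1 * norm x" for x
    by (meson max.cobounded1 mult_right_mono norm_ge_zero order_trans)
  then show thesis using that[of "max M0 1"] by simp
qed

lemma G_form_upper_bound:
  assumes "\<And>x. norm (G x) \<le> M * norm x"
  shows "Re (cinner (G x) x) \<le> M * (norm x)^2"
proof -
  have "Re (cinner (G x) x) \<le> cmod (cinner (G x) x)" by (rule complex_Re_le_cmod)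
  also have "\<dots> \<le> norm (G x) * norm x" by (rule cinner_CS)
  also have "\<dots> \<le> M * norm x * norm x" using assms[of x] by (simp add: mult_right_mono)
  finally show ?thesis by (simp add: power2_eq_square mult.assoc)
qed

lemma metric_operator_norm_sq_le_form:
  assumes "is_G_completion G J" and M: "M > 0" "\<And>x. norm (G x) \<le> M * norm x"
  shows "(norm (G x))^2 \<le> M * Re (cinner (G x) x)"
proof -
  define a where "a = norm (G x)"
  have "a^2 = cmod (cinner (G x) (G x))"
    unfolding a_def by (simp only: cinner_self norm_of_real) simp
  also have "\<dots> \<le> norm (J x) * norm (J (G x))"
    by (rule G_completion_cauchy_schwarz[OF assms(1)])
  finally have "(a^2)^2 \<le> (norm (J x))^2 * (norm (J (G x)))^2"
    by (metis power_mono power_mult_distrib zero_le_power2)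
  also have "\<dots> \<le> (norm (J x))^2 * (M * a^2)"
  proof -
    have "(norm (J (G x)))^2 \<le> M * a^2"
      using G_form_upper_bound[OF M(2), of "G x"] G_completion_norm_sq[OF assms(1)]
      unfolding a_def by simp
    then show ?thesis by (simp add: mult_left_mono)
  qed
  finally have "a^2 * a^2 \<le> (M * (norm (J x))^2) * a^2"
    by (simp add: power2_eq_square algebra_simps)
  then have "a^2 \<le> M * (norm (J x))^2"
  proof (cases "a = 0")
    case True then show ?thesis using M by simp
  next
    case False then have "a^2 > 0" by simp
    with \<open>a^2 * a^2 \<le> (M * (norm (J x))^2) * a^2\<close> show ?thesis
      by (meson mult_le_cancel_right_pos)
  qed
  then show ?thesis unfolding a_def using G_completion_norm_sq[OF assms(1)] by simp
qed

lemma metric_operator_coercive: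
  assumes "is_G_completion G J" and M: "M > 0" "\<And>x. norm (G x) \<le> M * norm x"
    and C: "\<And>x. norm x \<le> C * norm (G x)"
  shows "(norm x)^2 \<le> (C^2 * M) * Re (cinner (G x) x)"
proof -
  have "(norm x)^2 \<le> (C * norm (G x))^2" using C[of x] by (simp add: power_mono)
  also have "\<dots> = C^2 * (norm (G x))^2" by (simp add: power_mult_distrib)
  also have "\<dots> \<le> C^2 * (M * Re (cinner (G x) x))"
    using metric_operator_norm_sq_le_form[OF assms(1) M] by (simp add: mult_left_mono)
  finally show ?thesis by (simp add: mult.assoc)
qed

section \<open>Surjectivity of G and J under a bounded inverse\<close>

lemma coercive_contraction:
  fixes G :: "'a::complex_inner \<Rightarrow> 'a"
  assumes M: "M > 0" "\<And>u. (norm (G u))^2 \<le> M * Re (cinner (G u) u)"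
    and c: "c > 0" "\<And>u. (norm u)^2 \<le> c * Re (cinner (G u) u)"
  obtains k where "0 \<le> k" "k < 1" "\<And>u. norm (u - (1 / M) *\<^sub>R G u) \<le> k * norm u"
proof -
  define t where "t = 1 / M"
  have t: "t > 0" "t * M = 1" using M(1) unfolding t_def by auto
  define e where "e = min (t / c) (1/2)"
  have e: "0 < e" "e < 1" "e \<le> t / c" using t c unfolding e_def by auto
  define k where "k = sqrt (1 - e)"
  have k: "0 \<le> k" "k < 1" "k^2 = 1 - e" using e unfolding k_def by auto
  have "norm (u - t *\<^sub>R G u) \<le> k * norm u" for u
  proof -
    define q where "q = Re (cinner (G u) u)"
    have "(norm (u - t *\<^sub>R G u))^2 = (norm u)^2 - 2 * t * q + t^2 * (norm (G u))^2"
      unfolding q_def by (rule norm_diff_scaleR_sq)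
    also have "\<dots> \<le> (norm u)^2 - 2 * t * q + t^2 * (M * q)"
      using M(2)[of u] unfolding q_def by (simp add: mult_left_mono)
    also have "\<dots> = (norm u)^2 - t * q"
      using t by (simp add: power2_eq_square algebra_simps)
    also have "\<dots> \<le> (norm u)^2 - e * (norm u)^2"
    proof -
      have "e * (norm u)^2 \<le> (t / c) * (norm u)^2" by (rule mult_right_mono[OF e(3)]) simp
      also have "\<dots> \<le> t * q"
        using c(2)[of u] c(1) t(1) unfolding q_def by (simp add: field_simps)
      finally show ?thesis by simp
    qed
    also have "\<dots> = (k * norm u)^2" using k(3) by (simp add: power_mult_distrib left_diff_distrib)
    finally show ?thesis by (rule power2_le_imp_le) (use k in simp)
  qed
  then show thesis using that k unfolding t_def by blast
qed

text \<open>Such an operator is onto: a solution of \<open>Gw = z\<close> is the fixed point of the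
  contraction \<open>w \<mapsto> w - (Gw - z)/M\<close> (Banach's fixed point theorem).\<close>
lemma coercive_operator_surj:
  fixes G :: "'a::chilbert_space \<Rightarrow> 'a"
  assumes "clinear G"
    and M: "M > 0" "\<And>u. (norm (G u))^2 \<le> M * Re (cinner (G u) u)"
    and c: "c > 0" "\<And>u. (norm u)^2 \<le> c * Re (cinner (G u) u)"
  shows "surj G"
proof -
  obtain k where k: "0 \<le> k" "k < 1" "\<And>u. norm (u - (1 / M) *\<^sub>R G u) \<le> k * norm u"
    using coercive_contraction[OF M c] by blast
  have "\<exists>w. G w = z" for z
  proof -
    define T where "T w = w - (1 / M) *\<^sub>R G w + (1 / M) *\<^sub>R z" for w
    have "T x - T y = (x - y) - (1 / M) *\<^sub>R G (x - y)" for x y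
      unfolding T_def by (simp add: clinear_diff[OF assms(1)] algebra_simps)
    then have "\<forall>x y. dist (T x) (T y) \<le> k * dist x y"
      using k(3) by (simp add: dist_norm)
    then obtain w where "T w = w" using banach_fix_type[OF k(1,2)] by blast
    then have "G w = z" using M(1) unfolding T_def by (simp add: algebra_simps)
    then show ?thesis by blast
  qed
  then show ?thesis by (metis surj_def)
qed

text \<open>A bounded G makes J bounded, since \<open>|Jx|^2 = q(x) \<le> M |x|^2\<close>.\<close>
lemma G_completion_bounded_linear:
  assumes "is_G_completion G J" and M: "M > 0" "\<And>x. norm (G x) \<le> M * norm x"
  shows "bounded_linear J"
proof -
  have "linear J" using assms(1) by (simp add: is_G_completion_def clinear_imp_linear)
  moreover have "norm (J x) \<le> norm x * sqrt M" for x
  proof -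
    have "(norm (J x))^2 \<le> (norm x * sqrt M)^2"
      using G_completion_norm_sq[OF assms(1)] G_form_upper_bound[OF M(2)] M(1)
      by (simp add: power_mult_distrib mult.commute)
    then show ?thesis by (rule power2_le_imp_le) (use M in simp)
  qed
  ultimately show ?thesis
    unfolding linear_iff by (intro bounded_linear_intro[where K="sqrt M"]) auto
qed

text \<open>A bounded linear map with dense range that is bounded below on a complete space is
  onto: its range is complete, hence closed.\<close>
lemma dense_range_bounded_below_surj:
  fixes J :: "'a::{real_normed_vector, complete_space} \<Rightarrow> 'b::real_normed_vector"
  assumes "bounded_linear J" and "closure (range J) = UNIV"
    and "K > 0" and "\<And>x. K * norm x \<le> norm (J x)"
  shows "surj J"
proof -
  have "complete (range J)"
    using complete_isometric_image[OF assms(3) subspace_UNIV assms(1)] assms(4) complete_UNIV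
    by blast
  then have "closed (range J)" by (rule complete_imp_closed)
  then show ?thesis using assms(2) by (simp add: closure_closed)
qed

lemma bounded_inverse_surj:
  fixes G :: "'a::chilbert_space \<Rightarrow> 'a" and J :: "'a \<Rightarrow> 'b::chilbert_space"
  assumes "bounded_metric_operator G" and J: "is_G_completion G J"
    and "\<exists>C. \<forall>x. norm x \<le> C * norm (G x)"
  shows "surj G" and "surj J"
proof -
  obtain M where M: "M > 0" "\<And>x. norm (G x) \<le> M * norm x"
    using metric_operator_bound[OF assms(1)] by blast
  obtain C where C: "\<And>x. norm x \<le> C * norm (G x)" using assms(3) by blast
  define c where "c = max (C^2 * M) 1"
  have c: "c > 0" "\<And>x. (norm x)^2 \<le> c * Re (cinner (G x) x)"
  proof -
    show "c > 0" by (simp add: c_def)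
    fix x
    have "Re (cinner (G x) x) \<ge> 0"
      using G_completion_norm_sq[OF J] by (metis zero_le_power2)
    then have "(C^2 * M) * Re (cinner (G x) x) \<le> c * Re (cinner (G x) x)"
      by (simp add: c_def mult_right_mono)
    then show "(norm x)^2 \<le> c * Re (cinner (G x) x)"
      using metric_operator_coercive[OF J M C, of x] by linarith
  qed
  have "clinear G" using assms(1) by (simp add: bounded_metric_operator_def)
  then show "surj G"
    using coercive_operator_surj metric_operator_norm_sq_le_form[OF J M] M(1) c by blast
  show "surj J"
  proof (rule dense_range_bounded_below_surj)
    show "bounded_linear J" by (rule G_completion_bounded_linear[OF J M])
    show "closure (range J) = UNIV" using J by (simp add: is_G_completion_def)
    show "1 / sqrt c > 0" using c by simp
    show "1 / sqrt c * norm x \<le> norm (J x)" for x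
    proof -
      have "(norm x)^2 \<le> (sqrt c * norm (J x))^2"
        using c G_completion_norm_sq[OF J, of x] by (simp add: power_mult_distrib)
      then have "norm x \<le> sqrt c * norm (J x)" by (rule power2_le_imp_le) (use c in simp)
      then show ?thesis using c by (simp add: field_simps)
    qed
  qed
qed

section \<open>Transporting adjoints along J and G\<close>

definition completion_adjoint_graph ::
  "('a::complex_inner \<Rightarrow> 'b::chilbert_space) \<Rightarrow> 'a set \<Rightarrow> ('a \<Rightarrow> 'a) \<Rightarrow> ('b \<times> 'b) set" where
  "completion_adjoint_graph J D A = {(u, v). \<forall>x\<in>D. cinner (J (A x)) u = cinner (J x) v}"

text \<open>Its trace on H: the pairs \<open>(y, w)\<close> with \<open>(y, Gw)\<close> in the graph of \<open>(GA)^*\<close>,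
  i.e. the graph of \<open>G^{-1}(GA)^*\<close> whenever this makes sense.\<close>
definition metric_adjoint_graph ::
  "('a::complex_inner \<Rightarrow> 'a) \<Rightarrow> 'a set \<Rightarrow> ('a \<Rightarrow> 'a) \<Rightarrow> ('a \<times> 'a) set" where
  "metric_adjoint_graph G D A = {(y, w). (y, G w) \<in> adjoint_graph D (G \<circ> A)}"

lemma self_adjoint_in_completion_graph:
  "self_adjoint_in_completion J D A \<longleftrightarrow>
     completion_adjoint_graph J D A = map_prod J J ` graph D A"
  unfolding self_adjoint_in_completion_def completion_adjoint_graph_def graph_def
  by (simp add: image_Collect)

text \<open>The key identity: \<open>(Jy, Jw)\<close> is in the H(G)-adjoint iff \<open>(y, w)\<close> is in the metric
  adjoint, because \<open><J(Ax), Jy> = <GAx, y>\<close> and \<open><Jx, Jw> = <Gx, w> = <x, Gw>\<close>.\<close>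
lemma completion_adjoint_graph_iff:
  assumes "is_G_completion G J" and Gsym: "\<And>x y. cinner (G x) y = cinner x (G y)"
  shows "(J y, J w) \<in> completion_adjoint_graph J D A \<longleftrightarrow> (y, w) \<in> metric_adjoint_graph G D A"
  using assms(1)
  by (simp add: completion_adjoint_graph_def metric_adjoint_graph_def adjoint_graph_def
      is_G_completion_def Gsym)

lemma symmetric_op_iff_metric_adjoint:
  "symmetric_op D (G \<circ> A) \<longleftrightarrow> densely_defined D \<and> graph D A \<subseteq> metric_adjoint_graph G D A"
  unfolding symmetric_op_def metric_adjoint_graph_def graph_def by auto

lemma self_adjoint_op_iff_metric_adjoint:
  assumes "inj G" and "surj G"
  shows "self_adjoint_op D (G \<circ> A) \<longleftrightarrow>
           densely_defined D \<and> metric_adjoint_graph G D A = graph D A"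
proof -
  have inj_lift: "inj (map_prod id G)"
    using map_prod_inj_on[OF inj_on_id[of UNIV] assms(1)] by simp
  have adj: "adjoint_graph D (G \<circ> A) = map_prod id G ` metric_adjoint_graph G D A"
  proof (intro set_eqI iffI)
    fix p assume "p \<in> adjoint_graph D (G \<circ> A)"
    moreover obtain w where "G w = snd p" using assms(2) by (metis surj_def)
    ultimately show "p \<in> map_prod id G ` metric_adjoint_graph G D A"
      unfolding metric_adjoint_graph_def by (intro image_eqI[of _ _ "(fst p, w)"]) auto
  qed (auto simp: metric_adjoint_graph_def)
  have gr: "graph D (G \<circ> A) = map_prod id G ` graph D A"
    unfolding graph_def by (auto simp: image_iff)
  show ?thesis
    unfolding self_adjoint_op_def adj gr inj_image_eq_iff[OF inj_lift] by blast
qed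

lemma quasi_hermitian_if_metric_adjoint:
  assumes Gsym: "\<And>x y. cinner (G x) y = cinner x (G y)"
    and "graph D A \<subseteq> metric_adjoint_graph G D A"
  shows "quasi_hermitian G D A"
  using assms(2)
  by (auto simp: quasi_hermitian_def metric_adjoint_graph_def adjoint_graph_def graph_def
      Gsym[symmetric])

lemma self_adjoint_in_completion_imp_metric_adjoint:
  assumes "is_G_completion G J" and "\<And>x y. cinner (G x) y = cinner x (G y)"
    and "self_adjoint_in_completion J D A"
  shows "graph D A \<subseteq> metric_adjoint_graph G D A"
proof
  fix p assume "p \<in> graph D A"
  then have "map_prod J J p \<in> completion_adjoint_graph J D A"
    using assms(3) by (simp add: self_adjoint_in_completion_graph)
  then show "p \<in> metric_adjoint_graph G D A"
    using completion_adjoint_graph_iff[OF assms(1,2)] by (cases p) simp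
qed

lemma self_adjoint_in_completion_iff_metric_adjoint:
  assumes "is_G_completion G J" and "\<And>x y. cinner (G x) y = cinner x (G y)"
    and "inj J" and "surj J"
  shows "self_adjoint_in_completion J D A \<longleftrightarrow> metric_adjoint_graph G D A = graph D A"
proof -
  have "completion_adjoint_graph J D A = map_prod J J ` metric_adjoint_graph G D A"
  proof (intro set_eqI iffI)
    fix p assume p: "p \<in> completion_adjoint_graph J D A"
    obtain y w where "J y = fst p" "J w = snd p" using assms(4) by (metis surj_def)
    then have "p = map_prod J J (y, w)" by (simp add: prod_eq_iff)
    moreover from this have "(y, w) \<in> metric_adjoint_graph G D A"
      using p completion_adjoint_graph_iff[OF assms(1,2)] by simp
    ultimately show "p \<in> map_prod J J ` metric_adjoint_graph G D A" by blast
  qed (auto simp: completion_adjoint_graph_iff[OF assms(1,2)])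
  moreover have "inj (map_prod J J)"
    using map_prod_inj_on[OF assms(3) assms(3)] by simp
  ultimately show ?thesis
    by (simp add: self_adjoint_in_completion_graph inj_image_eq_iff)
qed

theorem proposition5p11:
  fixes G :: "'a::chilbert_space \<Rightarrow> 'a" and D :: "'a set" and A :: "'a \<Rightarrow> 'a"
    and J :: "'a \<Rightarrow> 'b::chilbert_space"
  assumes "bounded_metric_operator G"
    and "closed_operator D A" and "densely_defined D"
    and "is_G_completion G J"
  shows "(self_adjoint_in_completion J D A \<longrightarrow>
            symmetric_op D (G \<circ> A) \<and> quasi_hermitian G D A)
       \<and> ((\<exists>C. \<forall>x. norm x \<le> C * norm (G x)) \<longrightarrow>
            (self_adjoint_in_completion J D A \<longleftrightarrow> self_adjoint_op D (G \<circ> A)))"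
proof -
  have Gsym: "\<And>x y. cinner (G x) y = cinner x (G y)"
    using assms(1) by (simp add: bounded_metric_operator_def)
  have part1: "symmetric_op D (G \<circ> A) \<and> quasi_hermitian G D A"
    if "self_adjoint_in_completion J D A"
  proof -
    have "graph D A \<subseteq> metric_adjoint_graph G D A"
      by (rule self_adjoint_in_completion_imp_metric_adjoint[OF assms(4) Gsym that])
    then show ?thesis
      using assms(3) quasi_hermitian_if_metric_adjoint[OF Gsym]
      by (simp add: symmetric_op_iff_metric_adjoint)
  qed
  have part2: "self_adjoint_in_completion J D A \<longleftrightarrow> self_adjoint_op D (G \<circ> A)"
    if "\<exists>C. \<forall>x. norm x \<le> C * norm (G x)"
  proof -
    have "surj G" and "surj J"
      using bounded_inverse_surj[OF assms(1,4) that] by blast+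
    moreover have "inj G" and "inj J"
      using metric_operator_inj[OF assms(1)] G_completion_inj[OF assms(1,4)] by blast+
    ultimately show ?thesis
      using self_adjoint_in_completion_iff_metric_adjoint[OF assms(4) Gsym]
        self_adjoint_op_iff_metric_adjoint[of G D A] assms(3) by simp
  qed
  show ?thesis using part1 part2 by blast
qed

end
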